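(* Let $Z$ be a decision structure and $P$ a modular partition of $N(Z)$. Then the quotient $Z/P$ is a decision structure (in particular it is acyclic, has a unique source, and no two arcs leaving the same node share a label; and there is at most one arc between any ordered pair of blocks). Moreover, if $P$ is a maximal partition, then $Z/P$ is prime.
   Context: A decision structure is a finite directed acyclic graph $Z=(N,A)$, $A\subseteq N\times N$, with a unique source (node with no incoming arc), together with an arc labelling $\ell:A\to\mathcal{R}$ (into a set $\mathcal{R}$ of return values) and a node labelling by actions, such that distinct arcs leaving the same node have distinct labels; the arc out of $v$ labelled $r$, if it exists, is the $r$-arc out of $v$. For $X\subseteq N$, $Z[X]$ is the induced subgraph with inherited labels. A subset $X\subseteq N(Z)$ is a module of $Z$ if $Z[X]$ has a unique source (so is a decision structure) and for every node $v\notin X$: (i) every arc from $v$ to a node of $X$ ends at the source of $Z[X]$; (ii) if for some $x\in X$ there is an arc from $x$ to $v$ labelled $r$, then every $x'\in X$ has an $r$-arc, and this arc ends either at $v$ or at a node of $X$. The modules $N(Z)$ and $\{v\}$ ($v\in N(Z)$) are trivial; $Z$ is prime if all its modules are trivial. A module is maximal if it is a proper subset of $N(Z)$ and is contained in no module other than itself and $N(Z)$. A modular partition is a partition of $N(Z)$ all of whose blocks are modules; it is a maximal partition if all blocks are maximal modules. For a partition $P$ of $N(Z)$, the quotient $Z/P$ is the arc-labelled graph with node set $P$ having an arc $(S,T)$, $S\neq T$, labelled $r$ whenever some arc labelled $r$ goes from a node of $S$ to a node of $T$ (node labels of the quotient are immaterial here). The graphs $Z[S]$, $S\in P$, are the factors.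 *)

theory Defs
  imports Main "HOL-Library.Disjoint_Sets"
begin

text \<open>The paper's arc set
  A is the set of pairs (u,v) occurring in E; A \<subseteq> N \<times> N and the labelling is a
  function on A, i.e. at most one label (= at most one arc) per ordered pair.
  Node labels (actions) play no role in modules or quotients and are omitted.\<close>

definition arc_rel :: "('a \<times> 'r \<times> 'a) set \<Rightarrow> ('a \<times> 'a) set" where
  "arc_rel E = {(u, v). \<exists>r. (u, r, v) \<in> E}"

definition is_source :: "'a set \<Rightarrow> ('a \<times> 'r \<times> 'a) set \<Rightarrow> 'a \<Rightarrow> bool" where
  "is_source N E s \<longleftrightarrow> s \<in> N \<and> (\<forall>u r. (u, r, s) \<notin> E)"

definition decision_structure :: "'a set \<Rightarrow> ('a \<times> 'r \<times> 'a) set \<Rightarrow> bool" where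
  "decision_structure N E \<longleftrightarrow>
     finite N \<and>
     E \<subseteq> N \<times> UNIV \<times> N \<and>
     (\<forall>u v r r'. (u, r, v) \<in> E \<longrightarrow> (u, r', v) \<in> E \<longrightarrow> r = r') \<and>
     acyclic (arc_rel E) \<and>
     (\<exists>!s. is_source N E s) \<and>
     (\<forall>v r w w'. (v, r, w) \<in> E \<longrightarrow> (v, r, w') \<in> E \<longrightarrow> w = w')"

definition induced_arcs :: "('a \<times> 'r \<times> 'a) set \<Rightarrow> 'a set \<Rightarrow> ('a \<times> 'r \<times> 'a) set" where
  "induced_arcs E X = {(u, r, v). (u, r, v) \<in> E \<and> u \<in> X \<and> v \<in> X}"

definition is_module :: "'a set \<Rightarrow> ('a \<times> 'r \<times> 'a) set \<Rightarrow> 'a set \<Rightarrow> bool" where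
  "is_module N E X \<longleftrightarrow>
     X \<subseteq> N \<and>
     (\<exists>!s. is_source X (induced_arcs E X) s) \<and>
     (\<forall>v \<in> N - X.
        (\<forall>r x. x \<in> X \<longrightarrow> (v, r, x) \<in> E \<longrightarrow> is_source X (induced_arcs E X) x) \<and>
        (\<forall>r. (\<exists>x \<in> X. (x, r, v) \<in> E) \<longrightarrow>
              (\<forall>x' \<in> X. \<exists>w. (x', r, w) \<in> E \<and> (w = v \<or> w \<in> X))))"

definition trivial_module :: "'a set \<Rightarrow> 'a set \<Rightarrow> bool" where
  "trivial_module N X \<longleftrightarrow> X = N \<or> (\<exists>v \<in> N. X = {v})"

definition prime_ds :: "'a set \<Rightarrow> ('a \<times> 'r \<times> 'a) set \<Rightarrow> bool" where
  "prime_ds N E \<longleftrightarrow> (\<forall>X. is_module N E X \<longrightarrow> trivial_module N X)"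

definition maximal_module :: "'a set \<Rightarrow> ('a \<times> 'r \<times> 'a) set \<Rightarrow> 'a set \<Rightarrow> bool" where
  "maximal_module N E X \<longleftrightarrow>
     is_module N E X \<and> X \<subset> N \<and>
     (\<forall>Y. is_module N E Y \<longrightarrow> X \<subseteq> Y \<longrightarrow> Y = X \<or> Y = N)"

definition modular_partition :: "'a set \<Rightarrow> ('a \<times> 'r \<times> 'a) set \<Rightarrow> 'a set set \<Rightarrow> bool" where
  "modular_partition N E P \<longleftrightarrow> partition_on N P \<and> (\<forall>S \<in> P. is_module N E S)"

definition maximal_partition :: "'a set \<Rightarrow> ('a \<times> 'r \<times> 'a) set \<Rightarrow> 'a set set \<Rightarrow> bool" where
  "maximal_partition N E P \<longleftrightarrow> partition_on N P \<and> (\<forall>S \<in> P. maximal_module N E S)"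

definition quotient_arcs :: "('a \<times> 'r \<times> 'a) set \<Rightarrow> 'a set set \<Rightarrow> ('a set \<times> 'r \<times> 'a set) set" where
  "quotient_arcs E P = {(S, r, T). S \<in> P \<and> T \<in> P \<and> S \<noteq> T \<and>
                          (\<exists>u \<in> S. \<exists>v \<in> T. (u, r, v) \<in> E)}"

end

theory Submission
  imports Defs
begin

text \<open>A module is entered only at its source, so every quotient arc \<open>(S, r, T)\<close> comes from
  an arc of \<open>Z\<close> ending at the source of \<open>T\<close>.  Since every node of a block is reachable from
  the block's source, a path of \<open>Z/P\<close> lifts to a path of \<open>Z\<close> between block sources, and
  acyclicity transfers.  Condition (ii) on modules, applied at a node of the block that has
  no arc inside the block, yields the uniqueness of labels and of \<open>r\<close>-arcs in the quotient.
  Conversely, the union of the blocks of a module of \<open>Z/P\<close> is a module of \<open>Z\<close>; it contains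
  a block, which for a maximal partition is a maximal module, so the union is this block or
  all of \<open>N\<close>, i.e. the quotient module is trivial.\<close>

lemma decision_structureD:
  assumes "decision_structure N E"
  shows "finite N" "E \<subseteq> N \<times> UNIV \<times> N" "acyclic (arc_rel E)" "\<exists>!s. is_source N E s"
    "(u, r, v) \<in> E \<Longrightarrow> (u, r', v) \<in> E \<Longrightarrow> r = r'"
    "(u, r, v) \<in> E \<Longrightarrow> (u, r, v') \<in> E \<Longrightarrow> v = v'"
  using assms unfolding decision_structure_def by (elim conjE; blast)+

definition module_source :: "('a \<times> 'r \<times> 'a) set \<Rightarrow> 'a set \<Rightarrow> 'a" where
  "module_source E X = (THE s. is_source X (induced_arcs E X) s)"

lemma is_source_module_source:
  "is_module N E X \<Longrightarrow> is_source X (induced_arcs E X) (module_source E X)"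
  unfolding is_module_def module_source_def by (metis theI')

lemma module_source_unique:
  "is_module N E X \<Longrightarrow> is_source X (induced_arcs E X) y \<Longrightarrow> y = module_source E X"
  unfolding is_module_def module_source_def by (metis the1_equality)

lemma module_source_mem: "is_module N E X \<Longrightarrow> module_source E X \<in> X"
  using is_source_module_source unfolding is_source_def by metis

lemma no_arc_to_module_source:
  "is_module N E X \<Longrightarrow> u \<in> X \<Longrightarrow> (u, r, module_source E X) \<notin> E"
  using is_source_module_source[of N E X] module_source_mem[of N E X]
  unfolding is_source_def induced_arcs_def by blast

lemma module_non_source_has_pred:
  assumes "is_module N E X" "x \<in> X" "x \<noteq> module_source E X"
  obtains u r where "u \<in> X" "(u, r, x) \<in> E"
proof -
  have "\<not> is_source X (induced_arcs E X) x"
    using assms module_source_unique by metis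
  then show ?thesis using assms(2) that unfolding is_source_def induced_arcs_def by blast
qed

lemma module_entered_at_source:
  assumes "is_module N E X" "v \<in> N" "v \<notin> X" "(v, r, x) \<in> E" "x \<in> X"
  shows "x = module_source E X"
proof -
  have "is_source X (induced_arcs E X) x" using assms unfolding is_module_def by blast
  thus ?thesis using module_source_unique assms(1) by metis
qed

lemma module_exit:
  assumes "is_module N E X" "v \<in> N" "v \<notin> X" "(x, r, v) \<in> E" "x \<in> X" "x' \<in> X"
  shows "\<exists>w. (x', r, w) \<in> E \<and> (w = v \<or> w \<in> X)"
  using assms unfolding is_module_def by blast

lemma wf_induced_arcs:
  assumes "decision_structure N E" "X \<subseteq> N"
  shows "wf (arc_rel (induced_arcs E X))" "wf ((arc_rel (induced_arcs E X))\<inverse>)"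
proof -
  let ?R = "arc_rel (induced_arcs E X)"
  have "?R \<subseteq> X \<times> X" unfolding arc_rel_def induced_arcs_def by blast
  moreover have "finite X"
    using decision_structureD(1)[OF assms(1)] assms(2) finite_subset by blast
  ultimately have "finite ?R" by (meson finite_SigmaI finite_subset)
  moreover have "?R \<subseteq> arc_rel E" unfolding arc_rel_def induced_arcs_def by blast
  then have "acyclic ?R" using decision_structureD(3)[OF assms(1)] acyclic_subset by blast
  ultimately show "wf ?R" "wf (?R\<inverse>)"
    by (simp_all add: finite_acyclic_wf finite_acyclic_wf_converse)
qed

lemma module_reachable_from_source:
  assumes ds: "decision_structure N E" and X: "is_module N E X" and "x \<in> X"
  shows "(module_source E X, x) \<in> (arc_rel E)\<^sup>*"
proof -
  let ?R = "arc_rel (induced_arcs E X)"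
  have "wf ?R" using wf_induced_arcs ds X unfolding is_module_def by blast
  then show ?thesis using \<open>x \<in> X\<close>
  proof (induction x rule: wf_induct_rule)
    case (less x)
    show ?case
    proof (cases "\<exists>y. (y, x) \<in> ?R")
      case True
      then obtain y where y: "(y, x) \<in> ?R" by blast
      hence "y \<in> X" "(y, x) \<in> arc_rel E" unfolding arc_rel_def induced_arcs_def by auto
      thus ?thesis using less y by (meson rtrancl.rtrancl_into_rtrancl)
    next
      case False
      hence "is_source X (induced_arcs E X) x" using less.prems
        unfolding is_source_def arc_rel_def by blast
      thus ?thesis using module_source_unique X by (metis rtrancl.rtrancl_refl)
    qed
  qed
qed

lemma induced_sink_exists:
  assumes "decision_structure N E" "X \<subseteq> N" "X \<noteq> {}"
  obtains x where "x \<in> X" "\<And>r y. (x, r, y) \<in> E \<Longrightarrow> y \<notin> X"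
proof -
  obtain z where "z \<in> X" "\<forall>y. (y, z) \<in> (arc_rel (induced_arcs E X))\<inverse> \<longrightarrow> y \<notin> X"
    using wf_induced_arcs(2)[OF assms(1,2)] assms(3) unfolding wf_eq_minimal by blast
  thus ?thesis using that unfolding arc_rel_def induced_arcs_def by blast
qed

locale modular_quotient =
  fixes N :: "'a set" and E :: "('a \<times> 'r \<times> 'a) set" and P :: "'a set set"
  assumes ds: "decision_structure N E" and mp: "modular_partition N E P"
begin

abbreviation Q :: "('a set \<times> 'r \<times> 'a set) set" where
  "Q \<equiv> quotient_arcs E P"

abbreviation src :: "'a set \<Rightarrow> 'a" where
  "src \<equiv> module_source E"

lemma arc_in_nodes: "(u, r, v) \<in> E \<Longrightarrow> u \<in> N \<and> v \<in> N"
  using decision_structureD(2)[OF ds] by blast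

lemma block_module: "S \<in> P \<Longrightarrow> is_module N E S"
  using mp unfolding modular_partition_def by blast

lemma partition: "partition_on N P"
  using mp unfolding modular_partition_def by blast

lemma block_subset: "S \<in> P \<Longrightarrow> S \<subseteq> N"
  using partition partition_onD1 by blast

lemma block_nonempty: "S \<in> P \<Longrightarrow> S \<noteq> {}"
  using partition partition_onD3 by blast

lemma block_eq: "S \<in> P \<Longrightarrow> T \<in> P \<Longrightarrow> x \<in> S \<Longrightarrow> x \<in> T \<Longrightarrow> S = T"
  using partition partition_onD2 unfolding disjoint_def by blast

lemma block_cover: "x \<in> N \<Longrightarrow> \<exists>S\<in>P. x \<in> S"
  using partition partition_onD1 by blast

lemma Union_blocks_inject:
  assumes "XX \<subseteq> P" "YY \<subseteq> P" "\<Union>XX = \<Union>YY"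
  shows "XX = YY"
proof -
  have "XX \<subseteq> YY" if h: "XX \<subseteq> P" "YY \<subseteq> P" "\<Union>XX \<subseteq> \<Union>YY" for XX YY
  proof
    fix B assume B: "B \<in> XX"
    then obtain b where b: "b \<in> B" using block_nonempty h(1) by blast
    then obtain C where "C \<in> YY" "b \<in> C" using B h(3) by blast
    then show "B \<in> YY" using block_eq b B h(1,2) by blast
  qed
  then show ?thesis using assms by (metis subset_antisym order_refl)
qed

lemma src_in_block: "S \<in> P \<Longrightarrow> src S \<in> S"
  using module_source_mem block_module by blast

lemma src_notin_other_block: "S \<in> P \<Longrightarrow> T \<in> P \<Longrightarrow> S \<noteq> T \<Longrightarrow> src T \<notin> S"
  using src_in_block block_eq by blast

lemma quotient_arcD:
  assumes "(S, r, T) \<in> Q"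
  shows "S \<in> P \<and> T \<in> P \<and> S \<noteq> T \<and> (\<exists>u\<in>S. (u, r, src T) \<in> E)"
proof -
  from assms have ST: "S \<in> P" "T \<in> P" "S \<noteq> T"
    and "\<exists>u \<in> S. \<exists>v \<in> T. (u, r, v) \<in> E"
    unfolding quotient_arcs_def by auto
  then obtain u v where uv: "u \<in> S" "v \<in> T" "(u, r, v) \<in> E" by blast
  have "u \<notin> T" using block_eq ST uv by blast
  hence "v = src T"
    using module_entered_at_source[OF block_module[OF ST(2)] _ _ uv(3) uv(2)] arc_in_nodes uv(3)
    by blast
  thus ?thesis using ST uv by blast
qed

lemma quotient_label_unique:
  assumes "(S, r, T) \<in> Q" "(S, r', T) \<in> Q"
  shows "r = r'"
proof -
  from quotient_arcD[OF assms(1)] obtain u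
    where u: "S \<in> P" "T \<in> P" "S \<noteq> T" "u \<in> S" "(u, r, src T) \<in> E" by blast
  from quotient_arcD[OF assms(2)] obtain u' where u': "u' \<in> S" "(u', r', src T) \<in> E" by blast
  have t: "src T \<in> N" "src T \<notin> S"
    using src_in_block block_subset src_notin_other_block u by blast+
  obtain x where x: "x \<in> S" "\<And>r y. (x, r, y) \<in> E \<Longrightarrow> y \<notin> S"
    using induced_sink_exists[OF ds block_subset block_nonempty] u(1) by metis
  obtain w where "(x, r, w) \<in> E" "w = src T \<or> w \<in> S"
    using module_exit[OF block_module[OF u(1)] t u(5) u(4) x(1)] by blast
  moreover obtain w' where "(x, r', w') \<in> E" "w' = src T \<or> w' \<in> S"
    using module_exit[OF block_module[OF u(1)] t u'(2) u'(1) x(1)] by blast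
  ultimately show ?thesis using x(2) decision_structureD(5)[OF ds] by metis
qed

lemma quotient_deterministic:
  assumes "(S, r, T) \<in> Q" "(S, r, T') \<in> Q"
  shows "T = T'"
proof -
  from quotient_arcD[OF assms(1)] obtain u
    where u: "S \<in> P" "T \<in> P" "S \<noteq> T" "u \<in> S" "(u, r, src T) \<in> E" by blast
  from quotient_arcD[OF assms(2)] obtain u'
    where u': "T' \<in> P" "S \<noteq> T'" "u' \<in> S" "(u', r, src T') \<in> E" by blast
  have t: "src T \<in> N" "src T \<notin> S"
    using src_in_block block_subset src_notin_other_block u by blast+
  obtain w where w: "(u', r, w) \<in> E" "w = src T \<or> w \<in> S"
    using module_exit[OF block_module[OF u(1)] t u(5) u(4) u'(3)] by blast
  have "w = src T'" using decision_structureD(6)[OF ds w(1) u'(4)] .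
  hence "src T' = src T" using w src_notin_other_block u(1) u' by blast
  thus ?thesis using block_eq u(2) u'(1) src_in_block by metis
qed

lemma quotient_arc_lifts:
  assumes "(S, T) \<in> arc_rel Q"
  shows "(src S, src T) \<in> (arc_rel E)\<^sup>+"
proof -
  obtain r where "(S, r, T) \<in> Q" using assms unfolding arc_rel_def by blast
  from quotient_arcD[OF this] obtain u where u: "S \<in> P" "u \<in> S" "(u, r, src T) \<in> E" by blast
  have "(src S, u) \<in> (arc_rel E)\<^sup>*"
    using module_reachable_from_source[OF ds block_module] u by blast
  moreover have "(u, src T) \<in> arc_rel E" using u unfolding arc_rel_def by blast
  ultimately show ?thesis by (rule rtrancl_into_trancl1)
qed

lemma quotient_path_lifts: "(S, T) \<in> (arc_rel Q)\<^sup>+ \<Longrightarrow> (src S, src T) \<in> (arc_rel E)\<^sup>+"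
proof (induction rule: trancl_induct)
  case (base T)
  then show ?case by (rule quotient_arc_lifts)
next
  case (step T U)
  then show ?case using quotient_arc_lifts trancl_trans by metis
qed

lemma acyclic_quotient: "acyclic (arc_rel Q)"
  unfolding acyclic_def
proof (intro allI notI)
  fix S assume "(S, S) \<in> (arc_rel Q)\<^sup>+"
  then have "(src S, src S) \<in> (arc_rel E)\<^sup>+" by (rule quotient_path_lifts)
  then show False using decision_structureD(3)[OF ds] by (simp add: acyclic_def)
qed

lemma quotient_unique_source: "\<exists>!S. is_source P Q S"
proof -
  obtain s0 where s0: "is_source N E s0" "\<And>s. is_source N E s \<Longrightarrow> s = s0"
    using decision_structureD(4)[OF ds] by blast
  obtain S0 where S0: "S0 \<in> P" "s0 \<in> S0"
    using block_cover s0(1) unfolding is_source_def by blast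
  have "is_source S0 (induced_arcs E S0) s0"
    using s0 S0 unfolding is_source_def induced_arcs_def by blast
  hence src_S0: "src S0 = s0" using module_source_unique block_module S0(1) by metis
  have "is_source P Q S0"
    using S0(1) quotient_arcD src_S0 s0(1) unfolding is_source_def by metis
  moreover have "T = S0" if T: "is_source P Q T" for T
  proof -
    have TP: "T \<in> P" using T unfolding is_source_def by blast
    have "is_source N E (src T)"
      unfolding is_source_def
    proof (intro conjI allI notI)
      show "src T \<in> N" using src_in_block block_subset TP by blast
      fix u r assume ur: "(u, r, src T) \<in> E"
      have "u \<notin> T" using no_arc_to_module_source[OF block_module[OF TP]] ur by blast
      moreover obtain U where "U \<in> P" "u \<in> U" using block_cover arc_in_nodes ur by blast
      ultimately have "(U, r, T) \<in> Q"
        using TP src_in_block ur unfolding quotient_arcs_def by blast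
      thus False using T unfolding is_source_def by blast
    qed
    thus ?thesis using s0(2) block_eq TP S0 src_in_block by metis
  qed
  ultimately show ?thesis by blast
qed

theorem decision_structure_quotient: "decision_structure P Q"
proof -
  have "finite P"
    using finite_elements partition decision_structureD(1)[OF ds] by blast
  moreover have "Q \<subseteq> P \<times> UNIV \<times> P" unfolding quotient_arcs_def by blast
  ultimately show ?thesis unfolding decision_structure_def
    using quotient_label_unique quotient_deterministic acyclic_quotient quotient_unique_source
    by (intro conjI allI impI) assumption+
qed

context
  fixes XX :: "'a set set"
  assumes XX: "is_module P Q XX"
begin

abbreviation head_block :: "'a set" where
  "head_block \<equiv> module_source Q XX"

lemma quotient_module_subset: "XX \<subseteq> P"
  using XX[unfolded is_module_def] by (rule conjunct1)

lemma head_block_mem: "head_block \<in> XX" "head_block \<in> P"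
  using module_source_mem[OF XX] quotient_module_subset by blast+

lemma Union_source: "is_source (\<Union>XX) (induced_arcs E (\<Union>XX)) (src head_block)"
  unfolding is_source_def
proof (intro conjI allI notI)
  show "src head_block \<in> \<Union>XX" using src_in_block head_block_mem by blast
  fix u r assume "(u, r, src head_block) \<in> induced_arcs E (\<Union>XX)"
  then obtain B where B: "B \<in> XX" "u \<in> B" and e: "(u, r, src head_block) \<in> E"
    unfolding induced_arcs_def by blast
  show False
  proof (cases "B = head_block")
    case True
    then show False
      using no_arc_to_module_source[OF block_module[OF head_block_mem(2)]] B e by blast
  next
    case False
    have "B \<in> P" using B(1) quotient_module_subset by blast
    then have "(B, r, head_block) \<in> Q"
      using False B(2) e head_block_mem(2) src_in_block[OF head_block_mem(2)]
      unfolding quotient_arcs_def by blast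
    then show False
      using no_arc_to_module_source[OF XX B(1)] by blast
  qed
qed

lemma Union_source_unique:
  assumes y: "is_source (\<Union>XX) (induced_arcs E (\<Union>XX)) y"
  shows "y = src head_block"
proof -
  obtain B where B: "B \<in> XX" "y \<in> B" using y unfolding is_source_def by blast
  have BP: "B \<in> P" using B quotient_module_subset by blast
  have "is_source B (induced_arcs E B) y"
    using y B unfolding is_source_def induced_arcs_def by blast
  then have y_src: "y = src B" using module_source_unique block_module BP by metis
  have "B = head_block"
  proof (rule ccontr)
    assume "B \<noteq> head_block"
    then obtain C r where C: "C \<in> XX" "(C, r, B) \<in> Q"
      using module_non_source_has_pred[OF XX B(1)] by metis
    from quotient_arcD[OF C(2)] obtain u where "u \<in> C" "(u, r, src B) \<in> E" by blast
    then have "(u, r, y) \<in> induced_arcs E (\<Union>XX)"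
      using C B y_src unfolding induced_arcs_def by blast
    then show False using y unfolding is_source_def by blast
  qed
  then show ?thesis using y_src by simp
qed

lemma Union_entered_at_source:
  assumes v: "v \<in> N - \<Union>XX" and x: "x \<in> \<Union>XX" and e: "(v, r, x) \<in> E"
  shows "x = src head_block"
proof -
  obtain B where B: "B \<in> XX" "x \<in> B" using x by blast
  obtain V where V: "V \<in> P" "v \<in> V" using block_cover v by blast
  have "V \<notin> XX" using V v by blast
  moreover have "(V, r, B) \<in> Q"
    using V B v e quotient_module_subset unfolding quotient_arcs_def by blast
  ultimately have "B = head_block"
    using module_entered_at_source[OF XX] V(1) B(1) by blast
  then show ?thesis
    using module_entered_at_source[OF block_module] head_block_mem v e B by blast
qed

lemma Union_exit:
  assumes v: "v \<in> N - \<Union>XX" and x: "x \<in> B" "B \<in> XX" "(x, r, v) \<in> E"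
    and x': "x' \<in> B'" "B' \<in> XX"
  shows "\<exists>w. (x', r, w) \<in> E \<and> (w = v \<or> w \<in> \<Union>XX)"
proof (cases "B' = B")
  case True
  then show ?thesis
    using module_exit[OF block_module, of B v x r x'] quotient_module_subset v x x' by blast
next
  case False
  obtain V where V: "V \<in> P" "v \<in> V" using block_cover v by blast
  have VX: "V \<notin> XX" using V v by blast
  have "(B, r, V) \<in> Q"
    using V VX x quotient_module_subset unfolding quotient_arcs_def by blast
  then obtain W where W: "(B', r, W) \<in> Q" "W = V \<or> W \<in> XX"
    using module_exit[OF XX V(1) VX _ x(2) x'(2)] by blast
  from quotient_arcD[OF W(1)] obtain y
    where y: "W \<in> P" "B' \<noteq> W" "y \<in> B'" "(y, r, src W) \<in> E" by blast
  have B'P: "B' \<in> P" using x' quotient_module_subset by blast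
  obtain w where w: "(x', r, w) \<in> E" "w = src W \<or> w \<in> B'"
    using module_exit[OF block_module[OF B'P] _ _ y(4) y(3) x'(1)]
      src_in_block block_subset src_notin_other_block y(1,2) B'P by blast
  moreover have "src W = v" if "W = V"
  proof -
    have "x \<notin> V" using x VX block_eq V quotient_module_subset by blast
    then show ?thesis
      using module_entered_at_source[OF block_module[OF V(1)] _ _ x(3) V(2)] arc_in_nodes x(3) that
      by blast
  qed
  ultimately show ?thesis using W src_in_block y(1) x' by blast
qed

lemma is_module_Union: "is_module N E (\<Union>XX)"
  unfolding is_module_def
proof (intro conjI ballI allI impI)
  show "\<Union>XX \<subseteq> N" using quotient_module_subset block_subset by blast
  show "\<exists>!s. is_source (\<Union>XX) (induced_arcs E (\<Union>XX)) s"
    using Union_source Union_source_unique by blast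
next
  fix v r x assume "v \<in> N - \<Union>XX" "x \<in> \<Union>XX" "(v, r, x) \<in> E"
  then show "is_source (\<Union>XX) (induced_arcs E (\<Union>XX)) x"
    using Union_entered_at_source Union_source by metis
next
  fix v r x' assume "v \<in> N - \<Union>XX" "\<exists>x\<in>\<Union>XX. (x, r, v) \<in> E" "x' \<in> \<Union>XX"
  then show "\<exists>w. (x', r, w) \<in> E \<and> (w = v \<or> w \<in> \<Union>XX)"
    using Union_exit by blast
qed

end

theorem prime_quotient_of_maximal_partition:
  assumes "maximal_partition N E P"
  shows "prime_ds P Q"
  unfolding prime_ds_def
proof (intro allI impI)
  fix XX assume XX: "is_module P Q XX"
  let ?B = "module_source Q XX"
  have B: "?B \<in> XX" "?B \<in> P" using head_block_mem[OF XX] by blast+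
  have XX_P: "XX \<subseteq> P" by (rule quotient_module_subset[OF XX])
  have "maximal_module N E ?B"
    using assms B(2) unfolding maximal_partition_def by blast
  moreover have "?B \<subseteq> \<Union>XX" using B(1) by blast
  ultimately have "\<Union>XX = ?B \<or> \<Union>XX = N"
    using is_module_Union[OF XX] unfolding maximal_module_def by blast
  then show "trivial_module P XX"
  proof
    assume "\<Union>XX = ?B"
    then have "XX = {?B}" using Union_blocks_inject[OF XX_P, of "{?B}"] B(2) by simp
    then show ?thesis unfolding trivial_module_def using B(2) by blast
  next
    assume "\<Union>XX = N"
    then have "XX = P"
      using Union_blocks_inject[OF XX_P, of P] partition_onD1[OF partition] by simp
    then show ?thesis unfolding trivial_module_def by blast
  qed
qed

end

theorem mainTheorem5:
  fixes N :: "'a set" and E :: "('a \<times> 'r \<times> 'a) set" and P :: "'a set set"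
  assumes "decision_structure N E"
    and "modular_partition N E P"
  shows "decision_structure P (quotient_arcs E P)
         \<and> (maximal_partition N E P \<longrightarrow> prime_ds P (quotient_arcs E P))"
proof -
  interpret modular_quotient N E P using assms by unfold_locales
  show ?thesis
    using decision_structure_quotient prime_quotient_of_maximal_partition by blast
qed

end
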